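(* Let $m\ge d\ge1$, $\lambda=d/m$, and let $p,q$ be polynomials of degree $d$ with nonnegative real roots, with bivariate extensions $p(x,y)=y^{m-d}p(xy)$, $q(x,y)=y^{m-d}q(xy)$. Then \[ [p\boxplus_{d,\lambda}q](x,y)=\frac{(m-d)!}{d!\,m!}\sum_{k=0}^d(\partial_x\partial_y)^{d-k}p(x,y)\cdot\big[(\partial_x\partial_y)^kq\big](0,1), \] and \[ (p\boxplus_{d,\lambda}q)(x)=\frac{(m-d)!}{d!\,m!}\sum_{k=0}^d\big[(\partial_x\partial_y)^{d-k}p\big](x,1)\cdot\big[(\partial_x\partial_y)^kq\big](0,1). \]
   Context: For $p=\sum_{i=0}^d(-1)^ia_ix^{d-i}$, $q=\sum_{i=0}^d(-1)^ib_ix^{d-i}$: $(p\boxplus_{d,\lambda}q)(x)=\sum_{k=0}^dx^{d-k}(-1)^k\sum_{i+j=k}\frac{(d-i)!(d-j)!}{d!(d-k)!}\frac{(m-i)!(m-j)!}{m!(m-k)!}a_ib_j$, and $[p\boxplus_{d,\lambda}q](x,y):=y^{m-d}(p\boxplus_{d,\lambda}q)(xy)$. *)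

theory Defs
  imports "HOL-Analysis.Analysis" "HOL-Computational_Algebra.Polynomial"
begin

text \<open>Coefficients in the convention p = sum_i (-1)^i a_i x^(d-i).\<close>
definition sgn_coeff :: "nat \<Rightarrow> real poly \<Rightarrow> nat \<Rightarrow> real" where
  "sgn_coeff d p i = (-1) ^ i * coeff p (d - i)"

text \<open>The finite free convolution with parameters d and m (lambda = d/m).\<close>
definition box_conv :: "nat \<Rightarrow> nat \<Rightarrow> real poly \<Rightarrow> real poly \<Rightarrow> real poly" where
  "box_conv d m p q =
     (\<Sum>k\<le>d. monom ((-1) ^ k *
        (\<Sum>i\<le>k. (fact (d - i) * fact (d - (k - i))) / (fact d * fact (d - k))
                 * ((fact (m - i) * fact (m - (k - i))) / (fact m * fact (m - k)))
                 * sgn_coeff d p i * sgn_coeff d q (k - i))) (d - k))"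

definition biv :: "nat \<Rightarrow> nat \<Rightarrow> real poly \<Rightarrow> real \<Rightarrow> real \<Rightarrow> real" where
  "biv d m f = (\<lambda>x y. y ^ (m - d) * poly f (x * y))"

definition DxDy :: "(real \<Rightarrow> real \<Rightarrow> real) \<Rightarrow> real \<Rightarrow> real \<Rightarrow> real" where
  "DxDy F = (\<lambda>x y. deriv (\<lambda>s. deriv (\<lambda>t. F s t) y) x)"

definition nonneg_real_rooted :: "real poly \<Rightarrow> bool" where
  "nonneg_real_rooted p \<longleftrightarrow>
     (\<forall>z::complex. poly (map_poly complex_of_real p) z = 0 \<longrightarrow> Im z = 0 \<and> Re z \<ge> 0)"

end

theory Submission
  imports Defs
begin

text \<open>
  Write e = m - d. On bivariate extensions y^e f(xy) the operator \<partial>_x \<partial>_y acts as the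
  one-variable operator L f = (t f')' + e f', which sends the coefficients c_j of f to
  (j + 1) (j + 1 + e) c_(j+1). Hence [(\<partial>_x \<partial>_y)^k q](0,1) = k! (k + e)! / e! \<cdot> q_k, and comparing
  coefficients of x^j, the right-hand side becomes the defining double sum of the convolution
  after the substitution k = i + j; there the signs (-1)^i (-1)^(d-j-i) of the coefficient
  convention cancel against (-1)^(d-j).
\<close>

definition diag_pderiv :: "nat \<Rightarrow> real poly \<Rightarrow> real poly" where
  "diag_pderiv e f = pderiv (pCons 0 (pderiv f)) + smult (of_nat e) (pderiv f)"

lemma DxDy_biv: "DxDy (biv d m f) = biv d m (diag_pderiv (m - d) f)"
proof (intro ext)
  fix x y :: real
  define e where "e = m - d"
  have dy: "deriv (\<lambda>t. biv d m f s t) y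
      = of_nat e * y ^ (e - 1) * poly f (s * y) + y ^ e * s * poly (pderiv f) (s * y)" for s
    unfolding biv_def e_def[symmetric]
    by (rule DERIV_imp_deriv) (auto intro!: derivative_eq_intros simp: algebra_simps)
  have "DxDy (biv d m f) x y
      = of_nat e * (y ^ (e - 1) * y) * poly (pderiv f) (x * y)
        + y ^ e * (poly (pderiv f) (x * y) + x * y * poly (pderiv (pderiv f)) (x * y))"
    unfolding DxDy_def dy
    by (rule DERIV_imp_deriv) (auto intro!: derivative_eq_intros simp: algebra_simps)
  also have "of_nat e * (y ^ (e - 1) * y) = of_nat e * y ^ e"
    by (cases e) auto
  finally show "DxDy (biv d m f) x y = biv d m (diag_pderiv (m - d) f) x y"
    by (simp add: biv_def diag_pderiv_def pderiv_pCons e_def algebra_simps)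
qed

lemma coeff_diag_pderiv:
  "coeff (diag_pderiv e f) j = of_nat (Suc j) * of_nat (Suc j + e) * coeff f (Suc j)"
  by (simp add: diag_pderiv_def coeff_pderiv algebra_simps)

lemma coeff_diag_pderiv_funpow:
  "coeff ((diag_pderiv e ^^ r) f) j
     = fact (j + r) / fact j * (fact (j + r + e) / fact (j + e)) * coeff f (j + r)"
proof (induction r arbitrary: j)
  case 0
  then show ?case by simp
next
  case (Suc r)
  have "coeff ((diag_pderiv e ^^ Suc r) f) j
      = of_nat (Suc j) * of_nat (Suc j + e) * coeff ((diag_pderiv e ^^ r) f) (Suc j)"
    by (simp add: coeff_diag_pderiv)
  also have "\<dots> = fact (j + Suc r) / fact j * (fact (j + Suc r + e) / fact (j + e)) * coeff f (j + Suc r)"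
    unfolding Suc.IH by (simp add: field_simps del: of_nat_Suc)
  finally show ?case .
qed

lemma degree_box_conv_le: "degree (box_conv d m p q) \<le> d"
  unfolding box_conv_def
  by (rule degree_sum_le) (auto intro: order.trans[OF degree_monom_le])

lemma coeff_box_conv:
  assumes "j \<le> d"
  shows "coeff (box_conv d m p q) j = (-1) ^ (d - j) *
    (\<Sum>i\<le>d - j. (fact (d - i) * fact (d - (d - j - i))) / (fact d * fact (d - (d - j)))
       * ((fact (m - i) * fact (m - (d - j - i))) / (fact m * fact (m - (d - j))))
       * sgn_coeff d p i * sgn_coeff d q (d - j - i))"
    (is "_ = ?c (d - j)")
proof -
  have "coeff (box_conv d m p q) j = (\<Sum>k\<le>d. if k = d - j then ?c k else 0)"
    unfolding box_conv_def coeff_sum coeff_monom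
    by (rule sum.cong) (use assms in auto)
  then show ?thesis by simp
qed

lemma box_conv_term_eq:
  assumes "d = j + i + r" and "m = d + e"
  shows "(-1) ^ (d - j) *
      ((fact (d - i) * fact (d - (d - j - i))) / (fact d * fact (d - (d - j)))
       * ((fact (m - i) * fact (m - (d - j - i))) / (fact m * fact (m - (d - j))))
       * sgn_coeff d p i * sgn_coeff d q (d - j - i))
    = fact e / (fact d * fact m) *
      (fact (i + j) * (fact (i + j + e) / fact e) * coeff q (i + j)
       * (fact (d - i) / fact j * (fact (d - i + e) / fact (j + e)) * coeff p (d - i)))"
proof -
  have sign: "(-1::real) ^ (d - j) * ((-1) ^ i * (-1) ^ (d - j - i)) = 1"
    using assms(1) by (simp flip: power_add power_mult_distrib)
  have "d - j - i = r" "d - (d - j - i) = i + j" "d - (d - j) = j" "m - i = d - i + e"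
    "m - (d - j - i) = i + j + e" "m - (d - j) = j + e" "d - i = j + r"
    using assms by auto
  with sign show ?thesis
    unfolding sgn_coeff_def assms(2) by (simp add: field_simps)
qed

lemma box_conv_eq_sum_diag_pderiv:
  fixes p q :: "real poly"
  assumes "d \<le> m" and "degree p \<le> d"
  defines "L \<equiv> diag_pderiv (m - d)"
  shows "box_conv d m p q = smult (fact (m - d) / (fact d * fact m))
           (\<Sum>k\<le>d. smult (poly ((L ^^ k) q) 0) ((L ^^ (d - k)) p))"
proof (rule poly_eqI)
  fix j
  define e where "e = m - d"
  define T where "T k = fact k * (fact (k + e) / fact e) * coeff q k
      * (fact (j + (d - k)) / fact j * (fact (j + (d - k) + e) / fact (j + e)) * coeff p (j + (d - k)))"
    for k
  have p_zero: "coeff p n = 0" if "n > d" for n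
    using assms(2) that by (simp add: coeff_eq_0)
  have rhs: "coeff (smult (fact (m - d) / (fact d * fact m))
           (\<Sum>k\<le>d. smult (poly ((L ^^ k) q) 0) ((L ^^ (d - k)) p))) j
      = fact e / (fact d * fact m) * (\<Sum>k\<le>d. T k)"
    by (simp add: L_def e_def T_def coeff_sum poly_0_coeff_0 coeff_diag_pderiv_funpow)
  show "coeff (box_conv d m p q) j = coeff (smult (fact (m - d) / (fact d * fact m))
           (\<Sum>k\<le>d. smult (poly ((L ^^ k) q) 0) ((L ^^ (d - k)) p))) j"
  proof (cases "j \<le> d")
    case True
    have "(\<Sum>k\<le>d. T k) = (\<Sum>k\<in>{j..d}. T k)"
      by (rule sum.mono_neutral_right) (auto simp: T_def p_zero)
    also have "\<dots> = (\<Sum>i\<le>d - j. T (i + j))"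
      using sum.shift_bounds_cl_nat_ivl[of T 0 j "d - j"] True by (simp add: atMost_atLeast0)
    finally have "fact e / (fact d * fact m) * (\<Sum>k\<le>d. T k)
        = (\<Sum>i\<le>d - j. fact e / (fact d * fact m) * T (i + j))"
      by (simp add: sum_distrib_left)
    also have "\<dots> = coeff (box_conv d m p q) j"
      unfolding coeff_box_conv[OF True] sum_distrib_left
    proof (rule sum.cong[OF refl])
      fix i assume "i \<in> {..d - j}"
      then have split: "d = j + i + (d - j - i)" and "j + (d - (i + j)) = d - i"
        using True by auto
      then have "fact e / (fact d * fact m) * T (i + j) = fact e / (fact d * fact m) *
          (fact (i + j) * (fact (i + j + e) / fact e) * coeff q (i + j)
           * (fact (d - i) / fact j * (fact (d - i + e) / fact (j + e)) * coeff p (d - i)))"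
        by (simp add: T_def)
      also have "\<dots> = (-1) ^ (d - j) *
          ((fact (d - i) * fact (d - (d - j - i))) / (fact d * fact (d - (d - j)))
          * ((fact (m - i) * fact (m - (d - j - i))) / (fact m * fact (m - (d - j))))
          * sgn_coeff d p i * sgn_coeff d q (d - j - i))"
        using assms(1) by (intro box_conv_term_eq[OF split, symmetric]) (simp add: e_def)
      finally show "fact e / (fact d * fact m) * T (i + j) = \<dots>" .
    qed
    finally show ?thesis using rhs by simp
  next
    case False
    then show ?thesis
      using rhs degree_box_conv_le[of d m p q] by (simp add: T_def p_zero coeff_eq_0)
  qed
qed

lemma DxDy_funpow_biv: "(DxDy ^^ r) (biv d m f) = biv d m ((diag_pderiv (m - d) ^^ r) f)"
  by (induction r) (simp_all add: DxDy_biv)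

lemma biv_at_1: "biv d m f x 1 = poly f x"
  by (simp add: biv_def)

theorem mainTheorem13:
  fixes d m :: nat and p q :: "real poly"
  assumes "1 \<le> d" and "d \<le> m"
    and "degree p = d" and "degree q = d"
    and "nonneg_real_rooted p" and "nonneg_real_rooted q"
  shows "(\<forall>x y. biv d m (box_conv d m p q) x y =
            fact (m - d) / (fact d * fact m) *
            (\<Sum>k\<le>d. (DxDy ^^ (d - k)) (biv d m p) x y * (DxDy ^^ k) (biv d m q) 0 1))
       \<and> (\<forall>x. poly (box_conv d m p q) x =
            fact (m - d) / (fact d * fact m) *
            (\<Sum>k\<le>d. (DxDy ^^ (d - k)) (biv d m p) x 1 * (DxDy ^^ k) (biv d m q) 0 1))"
proof -
  have biv_box: "biv d m (box_conv d m p q) x y =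
      fact (m - d) / (fact d * fact m) *
      (\<Sum>k\<le>d. (DxDy ^^ (d - k)) (biv d m p) x y * (DxDy ^^ k) (biv d m q) 0 1)" for x y
    using box_conv_eq_sum_diag_pderiv[OF assms(2), of p q] assms(3)
    unfolding DxDy_funpow_biv
    by (simp add: biv_def poly_sum sum_distrib_left mult_ac)
  show ?thesis
    using biv_box biv_box[of _ 1] by (simp add: biv_at_1)
qed

end
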